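(* (1) Any voting method satisfying positive involvement and the Condorcet winner criterion refines the defensible set for linear profiles, i.e. $F(\mathbf{P})\subseteq D(\mathbf{P})$ for every linear profile $\mathbf{P}$. (2) Any voting method satisfying positive involvement and the weak Condorcet winner criterion refines the defensible set for all profiles, i.e. $F(\mathbf{P})\subseteq D(\mathbf{P})$ for every profile $\mathbf{P}$.
   Context: Fix infinite sets $\mathcal{X}$ (alternatives) and $\mathcal{V}$ (voters). A profile $\mathbf{P}$ is a function from a nonempty finite set $V(\mathbf{P})\subseteq\mathcal{V}$ to the set of strict weak orders on a nonempty finite set $X(\mathbf{P})\subseteq\mathcal{X}$; $(x,y)\in\mathbf{P}(i)$ means voter $i$ strictly prefers $x$ to $y$. $\mathbf{P}$ is linear if every $\mathbf{P}(i)$ is a linear order. $\mathrm{Support}_\mathbf{P}(a,b)=|\{i\in V(\mathbf{P}) : (a,b)\in\mathbf{P}(i)\}|$ and $\mathrm{Margin}_\mathbf{P}(x,y)=\mathrm{Support}_\mathbf{P}(x,y)-\mathrm{Support}_\mathbf{P}(y,x)$. A voting method is a function $F$ assigning to each profile $\mathbf{P}$ a nonempty $F(\mathbf{P})\subseteq X(\mathbf{P})$. Defensible set: $D(\mathbf{P})=\{x\in X(\mathbf{P}) : \text{for all } y\in X(\mathbf{P}) \text{ there is } z\in X(\mathbf{P}) \text{ with } \mathrm{Margin}_\mathbf{P}(z,y)\geq\mathrm{Margin}_\mathbf{P}(y,x)\}$. Positive involvement: if $x\in F(\mathbf{P})$ and $\mathbf{P}'$ is obtained from $\mathbf{P}$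 by adding one new voter who ranks $x$ uniquely first, then $x\in F(\mathbf{P}')$. Condorcet winner criterion: if $x$ is a Condorcet winner of $\mathbf{P}$ ($\mathrm{Margin}_\mathbf{P}(x,y)>0$ for all $y\neq x$) then $F(\mathbf{P})=\{x\}$. Weak Condorcet winner criterion: if $\mathbf{P}$ has a weak Condorcet winner (an $x$ with $\mathrm{Margin}_\mathbf{P}(x,y)\geq 0$ for all $y\neq x$), then every element of $F(\mathbf{P})$ is a weak Condorcet winner. *)

theory Defs
  imports Main
begin

text \<open>A profile is represented as a triple (V, X, R): a set of voters V, a set of
alternatives X, and R i the strict preference relation of voter i ((x,y) in R i means
voter i strictly prefers x to y).  Values of R outside V are normalised to the empty
relation, so that a profile in the paper's sense corresponds to exactly one triple.\<close>

type_synonym ('v, 'x) profile = "'v set \<times> 'x set \<times> ('v \<Rightarrow> ('x \<times> 'x) set)"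

definition voters :: "('v, 'x) profile \<Rightarrow> 'v set" where
  "voters P = fst P"

definition alts :: "('v, 'x) profile \<Rightarrow> 'x set" where
  "alts P = fst (snd P)"

definition pref :: "('v, 'x) profile \<Rightarrow> 'v \<Rightarrow> ('x \<times> 'x) set" where
  "pref P = snd (snd P)"

definition strict_weak_order_on :: "'x set \<Rightarrow> ('x \<times> 'x) set \<Rightarrow> bool" where
  "strict_weak_order_on X R \<longleftrightarrow>
     R \<subseteq> X \<times> X \<and>
     (\<forall>x\<in>X. (x, x) \<notin> R) \<and>
     (\<forall>x\<in>X. \<forall>y\<in>X. \<forall>z\<in>X. (x, y) \<in> R \<longrightarrow> (y, z) \<in> R \<longrightarrow> (x, z) \<in> R) \<and>
     (\<forall>x\<in>X. \<forall>y\<in>X. \<forall>z\<in>X. (x, y) \<in> R \<longrightarrow> (x, z) \<in> R \<or> (z, y) \<in> R)"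

definition strict_linear_order_on :: "'x set \<Rightarrow> ('x \<times> 'x) set \<Rightarrow> bool" where
  "strict_linear_order_on X R \<longleftrightarrow>
     strict_weak_order_on X R \<and>
     (\<forall>x\<in>X. \<forall>y\<in>X. x \<noteq> y \<longrightarrow> (x, y) \<in> R \<or> (y, x) \<in> R)"

definition is_profile :: "('v, 'x) profile \<Rightarrow> bool" where
  "is_profile P \<longleftrightarrow>
     finite (voters P) \<and> voters P \<noteq> {} \<and>
     finite (alts P) \<and> alts P \<noteq> {} \<and>
     (\<forall>i\<in>voters P. strict_weak_order_on (alts P) (pref P i)) \<and>
     (\<forall>i. i \<notin> voters P \<longrightarrow> pref P i = {})"

definition linear_profile :: "('v, 'x) profile \<Rightarrow> bool" where
  "linear_profile P \<longleftrightarrow> is_profile P \<and>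
     (\<forall>i\<in>voters P. strict_linear_order_on (alts P) (pref P i))"

definition support :: "('v, 'x) profile \<Rightarrow> 'x \<Rightarrow> 'x \<Rightarrow> nat" where
  "support P a b = card {i \<in> voters P. (a, b) \<in> pref P i}"

definition margin :: "('v, 'x) profile \<Rightarrow> 'x \<Rightarrow> 'x \<Rightarrow> int" where
  "margin P x y = int (support P x y) - int (support P y x)"

definition voting_method :: "(('v, 'x) profile \<Rightarrow> 'x set) \<Rightarrow> bool" where
  "voting_method F \<longleftrightarrow> (\<forall>P. is_profile P \<longrightarrow> F P \<noteq> {} \<and> F P \<subseteq> alts P)"

definition defensible :: "('v, 'x) profile \<Rightarrow> 'x set" where
  "defensible P = {x \<in> alts P. \<forall>y\<in>alts P. \<exists>z\<in>alts P. margin P z y \<ge> margin P y x}"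

definition add_voter_ranking_first :: "('v, 'x) profile \<Rightarrow> 'x \<Rightarrow> ('v, 'x) profile \<Rightarrow> bool" where
  "add_voter_ranking_first P x P' \<longleftrightarrow>
     (\<exists>i L. i \<notin> voters P \<and> strict_weak_order_on (alts P) L \<and>
        (\<forall>y\<in>alts P. y \<noteq> x \<longrightarrow> (x, y) \<in> L) \<and>
        P' = (insert i (voters P), alts P, (pref P)(i := L)))"

definition positive_involvement :: "(('v, 'x) profile \<Rightarrow> 'x set) \<Rightarrow> bool" where
  "positive_involvement F \<longleftrightarrow>
     (\<forall>P P' x. is_profile P \<longrightarrow> x \<in> F P \<longrightarrow> add_voter_ranking_first P x P' \<longrightarrow> x \<in> F P')"

definition condorcet_winner :: "('v, 'x) profile \<Rightarrow> 'x \<Rightarrow> bool" where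
  "condorcet_winner P x \<longleftrightarrow> x \<in> alts P \<and> (\<forall>y\<in>alts P. y \<noteq> x \<longrightarrow> margin P x y > 0)"

definition weak_condorcet_winner :: "('v, 'x) profile \<Rightarrow> 'x \<Rightarrow> bool" where
  "weak_condorcet_winner P x \<longleftrightarrow> x \<in> alts P \<and> (\<forall>y\<in>alts P. y \<noteq> x \<longrightarrow> margin P x y \<ge> 0)"

definition condorcet_winner_criterion :: "(('v, 'x) profile \<Rightarrow> 'x set) \<Rightarrow> bool" where
  "condorcet_winner_criterion F \<longleftrightarrow>
     (\<forall>P x. is_profile P \<longrightarrow> condorcet_winner P x \<longrightarrow> F P = {x})"

definition weak_condorcet_winner_criterion :: "(('v, 'x) profile \<Rightarrow> 'x set) \<Rightarrow> bool" where
  "weak_condorcet_winner_criterion F \<longleftrightarrow>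
     (\<forall>P. is_profile P \<longrightarrow> (\<exists>x. weak_condorcet_winner P x) \<longrightarrow>
          (\<forall>y\<in>F P. weak_condorcet_winner P y))"

end

theory Submission
  imports Defs
begin

text \<open>Suppose x \<in> F P although x is not defensible: some y beats x by a margin k that
exceeds every margin against y.  Add k - 1 fresh voters ranking x first, y second and
everything else tied last.  Positive involvement keeps x selected, yet now y beats x by 1
and loses to no one, while x loses to y.  So y is a weak Condorcet winner and x is not.
For linear profiles all margins have the parity of the number of voters, so every margin
against y is at most k - 2 and y even becomes a Condorcet winner.\<close>

lemma voting_method_subset_alts: "voting_method F \<Longrightarrow> is_profile P \<Longrightarrow> F P \<subseteq> alts P"
  unfolding voting_method_def by blast

lemma margin_swap: "margin P a b = - margin P b a"
  by (simp add: margin_def)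

lemma support_add_voter:
  assumes "finite V" "i \<notin> V"
  shows "support (insert i V, X, R(i := L)) a b = support (V, X, R) a b + (if (a, b) \<in> L then 1 else 0)"
proof -
  have "{j \<in> insert i V. (a, b) \<in> (R(i := L)) j} =
      (if (a, b) \<in> L then insert i {j \<in> V. (a, b) \<in> R j} else {j \<in> V. (a, b) \<in> R j})"
    using assms(2) by auto
  then show ?thesis
    using assms by (simp add: support_def voters_def pref_def)
qed

lemma positive_involvement_add_copies:
  fixes F :: "('v, 'x) profile \<Rightarrow> 'x set"
  assumes "is_profile P" "infinite (UNIV :: 'v set)" "positive_involvement F" "x \<in> F P"
    and L: "strict_weak_order_on (alts P) L" "\<forall>w\<in>alts P. w \<noteq> x \<longrightarrow> (x, w) \<in> L"
  shows "\<exists>Q. is_profile Q \<and> alts Q = alts P \<and> x \<in> F Q \<and>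
     (\<forall>a b. support Q a b = support P a b + (if (a, b) \<in> L then n else 0))"
proof (induction n)
  case 0
  show ?case using assms by (intro exI[of _ P]) auto
next
  case (Suc n)
  then obtain Q where Q: "is_profile Q" "alts Q = alts P" "x \<in> F Q"
    "\<forall>a b. support Q a b = support P a b + (if (a, b) \<in> L then n else 0)"
    by blast
  have fin: "finite (voters Q)" using Q(1) by (simp add: is_profile_def)
  obtain i where i: "i \<notin> voters Q" using ex_new_if_finite[OF assms(2) fin] by blast
  define Q' where "Q' = (insert i (voters Q), alts Q, (pref Q)(i := L))"
  have "is_profile Q'"
    using Q(1,2) L(1) i by (auto simp: Q'_def is_profile_def voters_def alts_def pref_def)
  moreover have "x \<in> F Q'"
  proof -
    have "add_voter_ranking_first Q x Q'"
      unfolding add_voter_ranking_first_def Q'_def using i L Q(2) by auto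
    then show ?thesis using assms(3) Q(1,3) unfolding positive_involvement_def by blast
  qed
  moreover have "support Q' a b = support Q a b + (if (a, b) \<in> L then 1 else 0)" for a b
    using support_add_voter[OF fin i, of "alts Q" "pref Q" L a b]
    by (simp add: Q'_def voters_def alts_def pref_def)
  ultimately show ?case using Q(2,4) by (intro exI[of _ Q']) (auto simp: Q'_def alts_def)
qed

definition top_two :: "'x set \<Rightarrow> 'x \<Rightarrow> 'x \<Rightarrow> ('x \<times> 'x) set" where
  "top_two X x y = {(x, w) | w. w \<in> X \<and> w \<noteq> x} \<union> {(y, w) | w. w \<in> X \<and> w \<noteq> x \<and> w \<noteq> y}"

lemma strict_weak_order_on_top_two:
  assumes "x \<in> X" "y \<in> X" "x \<noteq> y"
  shows "strict_weak_order_on X (top_two X x y)"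
  using assms unfolding strict_weak_order_on_def top_two_def by auto

lemma positive_involvement_boost_second:
  fixes F :: "('v, 'x) profile \<Rightarrow> 'x set"
  assumes "is_profile P" "infinite (UNIV :: 'v set)" "positive_involvement F"
    and "x \<in> F P" "x \<in> alts P" "y \<in> alts P" "y \<noteq> x"
  shows "\<exists>Q. is_profile Q \<and> alts Q = alts P \<and> x \<in> F Q \<and>
     margin Q y x = margin P y x - int n \<and>
     (\<forall>w\<in>alts P. w \<noteq> x \<longrightarrow> w \<noteq> y \<longrightarrow> margin Q w y = margin P w y - int n)"
proof -
  let ?L = "top_two (alts P) x y"
  have "\<forall>w\<in>alts P. w \<noteq> x \<longrightarrow> (x, w) \<in> ?L" by (auto simp: top_two_def)
  then obtain Q where Q: "is_profile Q" "alts Q = alts P" "x \<in> F Q"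
    "\<forall>a b. support Q a b = support P a b + (if (a, b) \<in> ?L then n else 0)"
    using positive_involvement_add_copies[OF assms(1-4) strict_weak_order_on_top_two]
      assms(5-7) by metis
  then have "margin Q a b = margin P a b + (if (a, b) \<in> ?L then int n else 0)
                                        - (if (b, a) \<in> ?L then int n else 0)" for a b
    by (auto simp: margin_def)
  then show ?thesis using Q(1-3) assms(5-7) by (intro exI[of _ Q]) (auto simp: top_two_def)
qed

lemma not_defensible_counterprofile:
  fixes F :: "('v, 'x) profile \<Rightarrow> 'x set"
  assumes "is_profile P" "infinite (UNIV :: 'v set)" "positive_involvement F"
    and "x \<in> F P" "x \<in> alts P" "x \<notin> defensible P"
  obtains Q y where "is_profile Q" "alts Q = alts P" "x \<in> F Q" "y \<in> alts P" "y \<noteq> x"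
    "margin Q y x = 1"
    "\<And>w. w \<in> alts P \<Longrightarrow> w \<noteq> x \<Longrightarrow> w \<noteq> y \<Longrightarrow> margin Q w y = margin P w y - margin P y x + 1"
    "\<And>w. w \<in> alts P \<Longrightarrow> margin P w y < margin P y x"
proof -
  obtain y where y: "y \<in> alts P" and beats: "\<forall>w\<in>alts P. margin P w y < margin P y x"
    using assms(5,6) unfolding defensible_def by force
  have "margin P y x > 0" using beats y by (force simp: margin_def)
  then have "y \<noteq> x" by (auto simp: margin_def)
  from positive_involvement_boost_second[OF assms(1-5) y this, of "nat (margin P y x - 1)"]
  obtain Q where "is_profile Q" "alts Q = alts P" "x \<in> F Q"
    "margin Q y x = margin P y x - (margin P y x - 1)"
    "\<forall>w\<in>alts P. w \<noteq> x \<longrightarrow> w \<noteq> y \<longrightarrow> margin Q w y = margin P w y - (margin P y x - 1)"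
    using \<open>margin P y x > 0\<close> by auto
  with that y \<open>y \<noteq> x\<close> beats show thesis by auto
qed

lemma linear_profile_margin_parity:
  assumes "linear_profile P" "a \<in> alts P" "b \<in> alts P" "a \<noteq> b"
  shows "even (margin P a b + int (card (voters P)))"
proof -
  let ?Sab = "{i \<in> voters P. (a, b) \<in> pref P i}" and ?Sba = "{i \<in> voters P. (b, a) \<in> pref P i}"
  have fin: "finite (voters P)" using assms(1) by (simp add: linear_profile_def is_profile_def)
  have lin: "\<forall>i\<in>voters P. strict_linear_order_on (alts P) (pref P i)"
    using assms(1) by (simp add: linear_profile_def)
  have "?Sab \<inter> ?Sba = {}"
    using lin assms(2,3) unfolding strict_linear_order_on_def strict_weak_order_on_def by blast
  moreover have "?Sab \<union> ?Sba = voters P"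
    using lin assms(2-4) unfolding strict_linear_order_on_def by blast
  ultimately have "card ?Sab + card ?Sba = card (voters P)"
    using card_Un_disjoint[of ?Sab ?Sba] fin by simp
  then show ?thesis unfolding margin_def support_def by presburger
qed

lemma positive_involvement_weak_condorcet_refines_defensible:
  fixes F :: "('v, 'x) profile \<Rightarrow> 'x set"
  assumes "infinite (UNIV :: 'v set)" "voting_method F" "positive_involvement F"
    and "weak_condorcet_winner_criterion F" "is_profile P"
  shows "F P \<subseteq> defensible P"
proof
  fix x assume x: "x \<in> F P"
  then have "x \<in> alts P" using voting_method_subset_alts[OF assms(2,5)] by blast
  show "x \<in> defensible P"
  proof (rule ccontr)
    assume "x \<notin> defensible P"
    then obtain Q y where Q: "is_profile Q" "alts Q = alts P" "x \<in> F Q" "y \<in> alts P" "y \<noteq> x"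
      "margin Q y x = 1"
      "\<And>w. w \<in> alts P \<Longrightarrow> w \<noteq> x \<Longrightarrow> w \<noteq> y \<Longrightarrow> margin Q w y = margin P w y - margin P y x + 1"
      "\<And>w. w \<in> alts P \<Longrightarrow> margin P w y < margin P y x"
      using not_defensible_counterprofile[OF assms(5,1,3) x \<open>x \<in> alts P\<close>] by metis
    have "margin Q y w \<ge> 0" if "w \<in> alts Q" "w \<noteq> y" for w
      using that Q(2,6) Q(7,8)[of w] margin_swap[of Q y w] by (cases "w = x") auto
    then have "weak_condorcet_winner Q y" using Q(2,4) by (simp add: weak_condorcet_winner_def)
    then have "weak_condorcet_winner Q x"
      using assms(4) Q(1,3) unfolding weak_condorcet_winner_criterion_def by blast
    moreover have "margin Q x y = -1" using Q(6) margin_swap[of Q x y] by simp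
    ultimately show False using Q(2,4,5) unfolding weak_condorcet_winner_def by force
  qed
qed

lemma positive_involvement_condorcet_refines_defensible_linear:
  fixes F :: "('v, 'x) profile \<Rightarrow> 'x set"
  assumes "infinite (UNIV :: 'v set)" "voting_method F" "positive_involvement F"
    and "condorcet_winner_criterion F" "linear_profile P"
  shows "F P \<subseteq> defensible P"
proof
  fix x assume x: "x \<in> F P"
  have P: "is_profile P" using assms(5) by (simp add: linear_profile_def)
  then have "x \<in> alts P" using voting_method_subset_alts[OF assms(2)] x by blast
  show "x \<in> defensible P"
  proof (rule ccontr)
    assume "x \<notin> defensible P"
    then obtain Q y where Q: "is_profile Q" "alts Q = alts P" "x \<in> F Q" "y \<in> alts P" "y \<noteq> x"
      "margin Q y x = 1"
      "\<And>w. w \<in> alts P \<Longrightarrow> w \<noteq> x \<Longrightarrow> w \<noteq> y \<Longrightarrow> margin Q w y = margin P w y - margin P y x + 1"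
      "\<And>w. w \<in> alts P \<Longrightarrow> margin P w y < margin P y x"
      using not_defensible_counterprofile[OF P assms(1,3) x \<open>x \<in> alts P\<close>] by metis
    have "margin Q y w > 0" if w: "w \<in> alts Q" "w \<noteq> y" "w \<noteq> x" for w
    proof -
      have "even (margin P w y - margin P y x)"
        using linear_profile_margin_parity[OF assms(5), of w y]
          linear_profile_margin_parity[OF assms(5), of y x] w Q(2,4,5) \<open>x \<in> alts P\<close>
        by (auto simp: even_diff)
      moreover have "margin P w y < margin P y x" using Q(8) w(1) Q(2) by simp
      ultimately have "margin P w y \<le> margin P y x - 2" by presburger
      then show ?thesis using w Q(2,7) margin_swap[of Q y w] by auto
    qed
    then have "condorcet_winner Q y" using Q(2,4,6) unfolding condorcet_winner_def by (metis zero_less_one)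
    then have "F Q = {y}" using assms(4) Q(1) unfolding condorcet_winner_criterion_def by blast
    then show False using Q(3,5) by auto
  qed
qed

theorem lemma1:
  assumes "infinite (UNIV :: 'x set)" and "infinite (UNIV :: 'v set)"
  shows "(\<forall>F :: ('v, 'x) profile \<Rightarrow> 'x set.
            voting_method F \<longrightarrow> positive_involvement F \<longrightarrow> condorcet_winner_criterion F \<longrightarrow>
            (\<forall>P. linear_profile P \<longrightarrow> F P \<subseteq> defensible P))
       \<and> (\<forall>F :: ('v, 'x) profile \<Rightarrow> 'x set.
            voting_method F \<longrightarrow> positive_involvement F \<longrightarrow> weak_condorcet_winner_criterion F \<longrightarrow>
            (\<forall>P. is_profile P \<longrightarrow> F P \<subseteq> defensible P))"
  using positive_involvement_condorcet_refines_defensible_linear[OF assms(2)]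
    positive_involvement_weak_condorcet_refines_defensible[OF assms(2)]
  by blast

end
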